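(* Let $t,k,n$ be positive integers with $2\le t\le k\le n$. Then there exists a left-compressed non-trivial $t$-intersecting family $\mathcal F\subseteq\binom{[n]}{k}$ whose codegree squared sum ${\rm co}_2(\mathcal F)$ is maximum among all non-trivial $t$-intersecting subfamilies of $\binom{[n]}{k}$.
   Context: A family is $t$-intersecting if any two members share at least $t$ elements; it is trivial if all members share $t$ common elements, non-trivial otherwise. ${\rm co}_2(\mathcal F)=\sum_{E\in\binom{[n]}{k-1}}d(E)^2$ with $d(E)=|\{F\in\mathcal F:E\subseteq F\}|$. Shift: $\delta_{ij}(A)=(A\setminus\{j\})\cup\{i\}$ if $j\in A$, $i\notin A$, $(A\setminus\{j\})\cup\{i\}\notin\mathcal F$, else $\delta_{ij}(A)=A$; $\Delta_{ij}(\mathcal F)=\{\delta_{ij}(A):A\in\mathcal F\}$; $\mathcal F$ is left-compressed if $\Delta_{ij}(\mathcal F)=\mathcal F$ for all $1\le i<j\le n$. *)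

theory Defs
  imports Main
begin

definition ksubsets :: "nat \<Rightarrow> nat \<Rightarrow> nat set set" where
  "ksubsets n k = {A. A \<subseteq> {1..n} \<and> card A = k}"

definition t_intersecting :: "nat \<Rightarrow> nat set set \<Rightarrow> bool" where
  "t_intersecting t \<F> \<longleftrightarrow> (\<forall>A\<in>\<F>. \<forall>B\<in>\<F>. card (A \<inter> B) \<ge> t)"

definition trivial_family :: "nat \<Rightarrow> nat set set \<Rightarrow> bool" where
  "trivial_family t \<F> \<longleftrightarrow> (\<exists>T. card T = t \<and> (\<forall>F\<in>\<F>. T \<subseteq> F))"

definition codeg :: "nat set set \<Rightarrow> nat set \<Rightarrow> nat" where
  "codeg \<F> E = card {F\<in>\<F>. E \<subseteq> F}"

definition co2 :: "nat \<Rightarrow> nat \<Rightarrow> nat set set \<Rightarrow> nat" where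
  "co2 n k \<F> = (\<Sum>E\<in>ksubsets n (k - 1). (codeg \<F> E)^2)"

definition shift_set :: "nat \<Rightarrow> nat \<Rightarrow> nat set set \<Rightarrow> nat set \<Rightarrow> nat set" where
  "shift_set i j \<F> A =
     (if j \<in> A \<and> i \<notin> A \<and> (A - {j}) \<union> {i} \<notin> \<F> then (A - {j}) \<union> {i} else A)"

definition shift_family :: "nat \<Rightarrow> nat \<Rightarrow> nat set set \<Rightarrow> nat set set" where
  "shift_family i j \<F> = shift_set i j \<F> ` \<F>"

definition left_compressed :: "nat \<Rightarrow> nat set set \<Rightarrow> bool" where
  "left_compressed n \<F> \<longleftrightarrow>
     (\<forall>i j. 1 \<le> i \<and> i < j \<and> j \<le> n \<longrightarrow> shift_family i j \<F> = \<F>)"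

end

theory Submission
  imports Defs
begin

(*
  Among the non-trivial t-intersecting families of maximum co2 take one, F, of least weight,
  the weight being the total sum of the elements of its members. A shift S_ij with i < j never
  decreases co2: for a (k-1)-set E containing j but not i, the codegrees of E and of its swap
  E - j + i keep their sum and move apart. It strictly decreases the weight whenever it changes
  F. Hence every shift that changes F makes it trivial, as S_ij(F) would otherwise be a lighter
  maximiser; and F is saturated, because adding any admissible set raises co2.

  Suppose some S_ij still changes F. The kernel of the trivial family S_ij(F) shows that every
  member of F contains a fixed (t-1)-set T' and one of i, j, both kinds occurring. By
  saturation F contains every k-superset of the core T' + i + j, and this forces every shift
  between two points outside the core to fix F. A member A with j in A, i not in A of least
  element sum, and likewise B with i, j exchanged, are then initial segments outside the core of
  the same size; so B = A - j + i lies in F, although S_ij moves A.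
*)

lemma finite_ksubsets: "finite (ksubsets n k)"
  unfolding ksubsets_def by (rule finite_subset[of _ "Pow {1..n}"]) auto

lemma ksubsetsD:
  assumes "A \<in> ksubsets n k"
  shows "A \<subseteq> {1..n}" "finite A" "card A = k"
  using assms finite_subset[of A "{1..n}"] unfolding ksubsets_def by auto

lemma card_insert_Diff_swap:
  assumes "finite A" "j \<in> A" "i \<notin> A"
  shows "card (insert i (A - {j})) = card A"
proof -
  have "card A > 0" using assms card_gt_0_iff by blast
  then show ?thesis using assms by (simp add: card_Diff_singleton)
qed

lemma insert_Diff_swap_in_ksubsets:
  assumes "A \<in> ksubsets n k" "j \<in> A" "i \<notin> A" "i \<in> {1..n}"
  shows "insert i (A - {j}) \<in> ksubsets n k"
  using assms ksubsetsD[OF assms(1)] card_insert_Diff_swap[of A j i]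
  unfolding ksubsets_def by auto

lemma inj_on_swap:
  assumes "i \<noteq> j"
  shows "inj_on (\<lambda>A. insert i (A - {j})) {A. j \<in> A \<and> i \<notin> A}"
proof (rule inj_onI)
  fix A B assume A: "A \<in> {A. j \<in> A \<and> i \<notin> A}" and B: "B \<in> {A. j \<in> A \<and> i \<notin> A}"
    and eq: "insert i (A - {j}) = insert i (B - {j})"
  have "A - {j} = B - {j}"
    using A B eq insert_ident[of i "A - {j}" "B - {j}"] by blast
  then show "A = B" using A B by (metis insert_Diff mem_Collect_eq)
qed

lemma shift_set_eq:
  "shift_set i j F A =
     (if j \<in> A \<and> i \<notin> A \<and> insert i (A - {j}) \<notin> F then insert i (A - {j}) else A)"
  by (simp add: shift_set_def)

lemma shift_set_in_ksubsets:
  "A \<in> ksubsets n k \<Longrightarrow> i \<in> {1..n} \<Longrightarrow> shift_set i j F A \<in> ksubsets n k"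
  by (simp add: shift_set_eq insert_Diff_swap_in_ksubsets)

lemma shift_family_subset_ksubsets:
  "F \<subseteq> ksubsets n k \<Longrightarrow> i \<in> {1..n} \<Longrightarrow> shift_family i j F \<subseteq> ksubsets n k"
  unfolding shift_family_def using shift_set_in_ksubsets by blast

lemma shift_set_neqD:
  assumes "shift_set i j F A \<noteq> A"
  shows "j \<in> A" "i \<notin> A" "insert i (A - {j}) \<notin> F" "shift_set i j F A = insert i (A - {j})"
  using assms by (simp_all add: shift_set_eq split: if_splits)

lemma shift_set_fixedD:
  assumes "shift_set i j F A = A" "j \<in> A" "i \<notin> A"
  shows "insert i (A - {j}) \<in> F"
proof (rule ccontr)
  assume "insert i (A - {j}) \<notin> F"
  with assms have "A = insert i (A - {j})" by (simp add: shift_set_eq)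
  with assms show False by blast
qed

lemma shift_set_in_iff:
  "A \<in> F \<Longrightarrow> shift_set i j F A \<in> F \<longleftrightarrow> shift_set i j F A = A"
  by (auto simp: shift_set_eq)

lemma inj_on_shift_set: "inj_on (shift_set i j F) F"
proof (rule inj_onI)
  fix A B assume A: "A \<in> F" and B: "B \<in> F" and eq: "shift_set i j F A = shift_set i j F B"
  show "A = B"
  proof (cases "shift_set i j F A \<in> F")
    case True
    then show ?thesis using eq shift_set_in_iff[OF A, of i j] shift_set_in_iff[OF B, of i j] by simp
  next
    case False
    then have "shift_set i j F B \<notin> F" using eq by simp
    then have "shift_set i j F A \<noteq> A" "shift_set i j F B \<noteq> B" using False A B by auto
    then show ?thesis
      using eq inj_onD[OF inj_on_swap, of i j A B] shift_set_neqD by (metis mem_Collect_eq)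
  qed
qed

lemma shift_family_moves:
  assumes "shift_family i j F \<noteq> F"
  obtains A where "A \<in> F" "j \<in> A" "i \<notin> A" "insert i (A - {j}) \<notin> F"
proof -
  obtain A where "A \<in> F" "shift_set i j F A \<noteq> A"
    using assms unfolding shift_family_def by (metis image_cong image_ident)
  then show ?thesis using that shift_set_neqD(1-3) by metis
qed

lemma t_le_card_swap_Int:
  assumes F: "t_intersecting t F" and AB: "A \<in> F" "B \<in> F" "finite A"
    and A: "j \<in> A" "i \<notin> A" and B: "shift_set i j F B = B"
  shows "t \<le> card (insert i (A - {j}) \<inter> B)"
proof -
  have tAB: "t \<le> card (A \<inter> B)" if "A \<in> F" "B \<in> F" for A B
    using F that unfolding t_intersecting_def by blast
  consider "j \<notin> B" | "j \<in> B" "i \<in> B" | "j \<in> B" "i \<notin> B" by blast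
  then show ?thesis
  proof cases
    case 1
    then have "card (A \<inter> B) \<le> card (insert i (A - {j}) \<inter> B)"
      using AB(3) by (intro card_mono) auto
    then show ?thesis using tAB[OF AB(1,2)] by linarith
  next
    case 2
    have "insert i (A - {j}) \<inter> B = insert i (A \<inter> B - {j})" using 2 by auto
    moreover have "card (insert i (A \<inter> B - {j})) = card (A \<inter> B)"
      using AB(3) A 2 by (intro card_insert_Diff_swap) auto
    ultimately show ?thesis using tAB[OF AB(1,2)] by simp
  next
    case 3
    \<comment> \<open>B stays put only because its own swap already lies in F\<close>
    have "insert i (B - {j}) \<in> F" using shift_set_fixedD[OF B 3] .
    moreover have "insert i (A - {j}) \<inter> B = A \<inter> insert i (B - {j})" using 3 A by auto
    ultimately show ?thesis using tAB[OF AB(1)] by simp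
  qed
qed

lemma t_intersecting_shift_family:
  assumes F: "t_intersecting t F" "\<forall>A\<in>F. finite A"
  shows "t_intersecting t (shift_family i j F)"
  unfolding t_intersecting_def shift_family_def
proof (intro ballI, elim imageE)
  fix A B X Y assume X: "X = shift_set i j F A" and A: "A \<in> F"
    and Y: "Y = shift_set i j F B" and B: "B \<in> F"
  have tAB: "t \<le> card (A \<inter> B)" using F(1) A B unfolding t_intersecting_def by blast
  consider "shift_set i j F A = A" "shift_set i j F B = B"
    | "shift_set i j F A \<noteq> A" "shift_set i j F B = B"
    | "shift_set i j F A = A" "shift_set i j F B \<noteq> B"
    | "shift_set i j F A \<noteq> A" "shift_set i j F B \<noteq> B"
    by blast
  then show "t \<le> card (X \<inter> Y)"
  proof cases
    case 1
    then show ?thesis using X Y tAB by simp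
  next
    case 2
    then show ?thesis using X Y t_le_card_swap_Int[OF F(1) A B] F(2) A shift_set_neqD[of i j F A]
      by simp
  next
    case 3
    then show ?thesis using X Y t_le_card_swap_Int[OF F(1) B A] F(2) B shift_set_neqD[of i j F B]
      by (simp add: Int_commute)
  next
    case 4
    then have "X \<inter> Y = insert i (A \<inter> B - {j})" "j \<in> A \<inter> B" "i \<notin> A \<inter> B"
      using X Y shift_set_neqD[of i j F A] shift_set_neqD[of i j F B] by auto
    moreover have "card (insert i (A \<inter> B - {j})) = card (A \<inter> B)"
      using F(2) A calculation(2,3) by (intro card_insert_Diff_swap) auto
    ultimately show ?thesis using tAB by simp
  qed
qed

lemma codeg_shift_family: "codeg (shift_family i j F) E = card {A \<in> F. E \<subseteq> shift_set i j F A}"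
proof -
  have "{G \<in> shift_family i j F. E \<subseteq> G} = shift_set i j F ` {A \<in> F. E \<subseteq> shift_set i j F A}"
    unfolding shift_family_def by auto
  moreover have "inj_on (shift_set i j F) {A \<in> F. E \<subseteq> shift_set i j F A}"
    by (rule inj_on_subset[OF inj_on_shift_set]) auto
  ultimately show ?thesis unfolding codeg_def by (simp add: card_image)
qed

lemma subset_shift_set_iff:
  assumes "i \<in> E \<longleftrightarrow> j \<in> E"
  shows "E \<subseteq> shift_set i j F A \<longleftrightarrow> E \<subseteq> A"
proof (cases "shift_set i j F A = A")
  case False
  with shift_set_neqD[OF False] assms show ?thesis by auto
qed simp

lemma codeg_shift_family_eq:
  "(i \<in> E \<longleftrightarrow> j \<in> E) \<Longrightarrow> codeg (shift_family i j F) E = codeg F E"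
  unfolding codeg_shift_family by (simp add: codeg_def subset_shift_set_iff)

lemma codeg_shift_family_le:
  assumes "finite F" "j \<in> E"
  shows "codeg (shift_family i j F) E \<le> codeg F E"
proof -
  have "E \<subseteq> A" if "E \<subseteq> shift_set i j F A" for A
    using that assms(2) shift_set_neqD[of i j F A] by (cases "shift_set i j F A = A") auto
  then show ?thesis
    unfolding codeg_shift_family unfolding codeg_def using assms(1) by (intro card_mono) auto
qed

lemma card_filter_eq_sum_of_bool: "finite F \<Longrightarrow> card {A \<in> F. P A} = (\<Sum>A\<in>F. of_bool (P A))"
  by (simp add: Int_def conj_commute)

lemma codeg_shift_family_add:
  assumes "finite F" "j \<in> E" "i \<notin> E"
  shows "codeg F E + codeg F (insert i (E - {j})) =
         codeg (shift_family i j F) E + codeg (shift_family i j F) (insert i (E - {j}))"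
proof -
  let ?E' = "insert i (E - {j})" and ?d = "shift_set i j F"
  have pointwise: "of_bool (E \<subseteq> A) + of_bool (?E' \<subseteq> A)
                   = of_bool (E \<subseteq> ?d A) + (of_bool (?E' \<subseteq> ?d A) :: nat)" for A
  proof (cases "?d A = A")
    case False
    note moved = shift_set_neqD[OF False]
    have "E \<subseteq> A \<longleftrightarrow> ?E' \<subseteq> ?d A" using moved assms(2,3) by auto
    moreover have "\<not> ?E' \<subseteq> A" "\<not> E \<subseteq> ?d A" using moved assms(2,3) by auto
    ultimately show ?thesis by simp
  qed simp
  have "codeg F E + codeg F ?E' = (\<Sum>A\<in>F. of_bool (E \<subseteq> A) + of_bool (?E' \<subseteq> A))"
    by (simp only: codeg_def card_filter_eq_sum_of_bool[OF assms(1)] sum.distrib)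
  also have "\<dots> = (\<Sum>A\<in>F. of_bool (E \<subseteq> ?d A) + of_bool (?E' \<subseteq> ?d A))"
    by (intro sum.cong refl pointwise)
  also have "\<dots> = codeg (shift_family i j F) E + codeg (shift_family i j F) ?E'"
    by (simp only: codeg_shift_family card_filter_eq_sum_of_bool[OF assms(1)] sum.distrib)
  finally show ?thesis .
qed

lemma sum_power2_le_of_spread:
  fixes p q p' q' :: nat
  assumes "p' \<le> p" "p' \<le> q" "p + q = p' + q'"
  shows "p\<^sup>2 + q\<^sup>2 \<le> p'\<^sup>2 + q'\<^sup>2"
proof -
  obtain a b where "p = p' + a" "q = p' + b" using assms(1,2) by (metis le_add_diff_inverse)
  moreover have "q' = p' + a + b" using assms(3) calculation by simp
  ultimately show ?thesis by (simp add: power2_eq_square algebra_simps)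
qed

lemma codeg_shift_family_le_codeg_swap:
  assumes "finite F" "j \<in> E" "i \<notin> E"
  shows "codeg (shift_family i j F) E \<le> codeg F (insert i (E - {j}))"
proof -
  let ?D = "{A \<in> F. E \<subseteq> shift_set i j F A}"
  define \<psi> where "\<psi> A = (if i \<in> A then A else insert i (A - {j}))" for A :: "nat set"
  have ij: "i \<noteq> j" using assms by auto
  have fixed: "shift_set i j F A = A \<and> j \<in> A" if "A \<in> ?D" for A
  proof -
    have j: "j \<in> shift_set i j F A" using that assms(2) by auto
    then have "shift_set i j F A = A"
      using ij shift_set_neqD(4)[of i j F A] by (cases "shift_set i j F A = A") auto
    then show ?thesis using j by simp
  qed
  have "inj_on \<psi> ?D"
  proof (rule inj_onI)
    fix A B assume "A \<in> ?D" "B \<in> ?D" and eq: "\<psi> A = \<psi> B"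
    then have AB: "j \<in> A" "j \<in> B" using fixed by blast+
    then have "i \<in> A \<longleftrightarrow> i \<in> B" using eq ij unfolding \<psi>_def by (metis Diff_iff insertE singletonI)
    then show "A = B"
      using eq AB inj_onD[OF inj_on_swap[OF ij], of A B] unfolding \<psi>_def by (cases "i \<in> A") auto
  qed
  moreover have "\<psi> A \<in> {B \<in> F. insert i (E - {j}) \<subseteq> B}" if "A \<in> ?D" for A
    using that fixed[OF that] shift_set_fixedD[of i j F A] unfolding \<psi>_def by auto
  ultimately show ?thesis
    unfolding codeg_shift_family unfolding codeg_def using assms(1) by (intro card_inj_on_le) auto
qed

lemma bij_betw_swap_ksubsets:
  assumes "i \<in> {1..n}" "j \<in> {1..n}" "i \<noteq> j"
  shows "bij_betw (\<lambda>E. insert i (E - {j}))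
           {E \<in> ksubsets n m. j \<in> E \<and> i \<notin> E} {E \<in> ksubsets n m. i \<in> E \<and> j \<notin> E}"
proof (rule bij_betw_imageI)
  show "inj_on (\<lambda>E. insert i (E - {j})) {E \<in> ksubsets n m. j \<in> E \<and> i \<notin> E}"
    by (rule inj_on_subset[OF inj_on_swap[OF assms(3)]]) auto
  show "(\<lambda>E. insert i (E - {j})) ` {E \<in> ksubsets n m. j \<in> E \<and> i \<notin> E}
        = {E \<in> ksubsets n m. i \<in> E \<and> j \<notin> E}"
  proof (intro equalityI subsetI)
    fix G assume "G \<in> (\<lambda>E. insert i (E - {j})) ` {E \<in> ksubsets n m. j \<in> E \<and> i \<notin> E}"
    then obtain E where "E \<in> ksubsets n m" "j \<in> E" "i \<notin> E" "G = insert i (E - {j})" by blast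
    then show "G \<in> {E \<in> ksubsets n m. i \<in> E \<and> j \<notin> E}"
      using insert_Diff_swap_in_ksubsets[of E n m j i] assms by simp
  next
    fix G assume G: "G \<in> {E \<in> ksubsets n m. i \<in> E \<and> j \<notin> E}"
    then have "insert j (G - {i}) \<in> {E \<in> ksubsets n m. j \<in> E \<and> i \<notin> E}"
      using insert_Diff_swap_in_ksubsets[of G n m i j] assms by simp
    moreover have "G = insert i (insert j (G - {i}) - {j})" using G assms(3) by auto
    ultimately show "G \<in> (\<lambda>E. insert i (E - {j})) ` {E \<in> ksubsets n m. j \<in> E \<and> i \<notin> E}"
      by blast
  qed
qed

lemma sum_ksubsets_split_swap:
  fixes f :: "nat set \<Rightarrow> 'a::comm_monoid_add"
  assumes "i \<in> {1..n}" "j \<in> {1..n}" "i \<noteq> j"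
  shows "(\<Sum>E\<in>ksubsets n m. f E) =
     (\<Sum>E\<in>{E \<in> ksubsets n m. i \<in> E \<longleftrightarrow> j \<in> E}. f E) +
     (\<Sum>E\<in>{E \<in> ksubsets n m. j \<in> E \<and> i \<notin> E}. f E + f (insert i (E - {j})))"
proof -
  let ?K = "ksubsets n m"
  let ?Kz = "{E \<in> ?K. i \<in> E \<longleftrightarrow> j \<in> E}" and ?Kj = "{E \<in> ?K. j \<in> E \<and> i \<notin> E}"
    and ?Ki = "{E \<in> ?K. i \<in> E \<and> j \<notin> E}"
  have fin: "finite ?Kz" "finite ?Kj" "finite ?Ki" using finite_ksubsets[of n m] by auto
  have "(\<Sum>E\<in>?K. f E) = (\<Sum>E\<in>?Kz \<union> (?Kj \<union> ?Ki). f E)"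
    by (rule sum.cong) blast+
  also have "\<dots> = (\<Sum>E\<in>?Kz. f E) + (\<Sum>E\<in>?Kj \<union> ?Ki. f E)"
    by (rule sum.union_disjoint) (use fin in auto)
  also have "(\<Sum>E\<in>?Kj \<union> ?Ki. f E) = (\<Sum>E\<in>?Kj. f E) + (\<Sum>E\<in>?Ki. f E)"
    by (rule sum.union_disjoint) (use fin in auto)
  finally have "(\<Sum>E\<in>?K. f E) = (\<Sum>E\<in>?Kz. f E) + ((\<Sum>E\<in>?Kj. f E) + (\<Sum>E\<in>?Ki. f E))" .
  moreover have "(\<Sum>E\<in>?Ki. f E) = (\<Sum>E\<in>?Kj. f (insert i (E - {j})))"
    by (rule sum.reindex_bij_betw[OF bij_betw_swap_ksubsets[OF assms], symmetric])
  ultimately show ?thesis by (simp add: sum.distrib)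
qed

lemma co2_le_co2_shift_family:
  assumes F: "finite F" and ij: "i \<in> {1..n}" "j \<in> {1..n}" "i \<noteq> j"
  shows "co2 n k F \<le> co2 n k (shift_family i j F)"
proof -
  let ?F' = "shift_family i j F"
  have pair: "(codeg F E)\<^sup>2 + (codeg F (insert i (E - {j})))\<^sup>2
           \<le> (codeg ?F' E)\<^sup>2 + (codeg ?F' (insert i (E - {j})))\<^sup>2" if "j \<in> E" "i \<notin> E" for E
    using sum_power2_le_of_spread[OF codeg_shift_family_le[OF F that(1)]
        codeg_shift_family_le_codeg_swap[OF F that] codeg_shift_family_add[OF F that]] .
  show ?thesis
    unfolding co2_def sum_ksubsets_split_swap[OF ij]
    by (rule add_mono; rule sum_mono) (auto simp: codeg_shift_family_eq pair)
qed

definition weight :: "nat set set \<Rightarrow> nat" where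
  "weight G = (\<Sum>A\<in>G. \<Sum>A)"

lemma sum_insert_Diff_swap:
  "finite A \<Longrightarrow> j \<in> A \<Longrightarrow> i \<notin> A \<Longrightarrow> \<Sum>(insert i (A - {j})) + j = \<Sum>A + i"
  by (simp add: sum.remove[of A j] algebra_simps)

lemma sum_shift_set_less:
  assumes "finite A" "i < j" "shift_set i j F A \<noteq> A"
  shows "\<Sum>(shift_set i j F A) < \<Sum>A"
proof -
  note moved = shift_set_neqD[OF assms(3)]
  show ?thesis using sum_insert_Diff_swap[OF assms(1) moved(1,2)] moved(4) assms(2) by simp
qed

lemma weight_shift_family_less:
  assumes "finite F" "\<forall>A\<in>F. finite A" "i < j" "shift_family i j F \<noteq> F"
  shows "weight (shift_family i j F) < weight F"
proof -
  have "weight (shift_family i j F) = (\<Sum>A\<in>F. \<Sum>(shift_set i j F A))"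
    unfolding weight_def shift_family_def by (simp add: sum.reindex[OF inj_on_shift_set])
  also have "\<dots> < (\<Sum>A\<in>F. \<Sum>A)"
  proof (rule sum_strict_mono_ex1[OF assms(1)])
    show "\<forall>A\<in>F. \<Sum>(shift_set i j F A) \<le> \<Sum>A"
      using sum_shift_set_less assms(2,3) by (metis order.refl less_imp_le)
    obtain A where "A \<in> F" "j \<in> A" "i \<notin> A" "insert i (A - {j}) \<notin> F"
      using shift_family_moves[OF assms(4)] .
    then have "A \<in> F" "shift_set i j F A \<noteq> A" by (auto simp: shift_set_eq)
    then show "\<exists>A\<in>F. \<Sum>(shift_set i j F A) < \<Sum>A"
      using sum_shift_set_less assms(2,3) by blast
  qed
  finally show ?thesis unfolding weight_def .
qed

lemma co2_less_co2_insert: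
  assumes F: "finite F" and C: "C \<in> ksubsets n k" "C \<notin> F" and k: "1 \<le> k"
  shows "co2 n k F < co2 n k (insert C F)"
  unfolding co2_def
proof (rule sum_strict_mono_ex1[OF finite_ksubsets])
  have "codeg F E \<le> codeg (insert C F) E" for E
    unfolding codeg_def using F by (intro card_mono) auto
  then show "\<forall>E\<in>ksubsets n (k - 1). (codeg F E)\<^sup>2 \<le> (codeg (insert C F) E)\<^sup>2"
    by (simp add: power_mono)
  obtain c where c: "c \<in> C" using C(1) k ksubsetsD(3)[OF C(1)] by fastforce
  have "C - {c} \<in> ksubsets n (k - 1)" using C(1) c ksubsetsD[OF C(1)] unfolding ksubsets_def by auto
  moreover have "{G \<in> insert C F. C - {c} \<subseteq> G} = insert C {G \<in> F. C - {c} \<subseteq> G}" by auto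
  then have "codeg (insert C F) (C - {c}) = Suc (codeg F (C - {c}))"
    unfolding codeg_def using F C(2) by simp
  ultimately show "\<exists>E\<in>ksubsets n (k - 1). (codeg F E)\<^sup>2 < (codeg (insert C F) E)\<^sup>2"
    by (intro bexI[of _ "C - {c}"]) (auto simp: power_strict_mono)
qed

definition maximal_t_intersecting :: "nat \<Rightarrow> nat \<Rightarrow> nat \<Rightarrow> nat set set \<Rightarrow> bool" where
  "maximal_t_intersecting n k t F \<longleftrightarrow> F \<subseteq> ksubsets n k \<and> t_intersecting t F \<and>
     (\<forall>C\<in>ksubsets n k. t_intersecting t (insert C F) \<longrightarrow> C \<in> F)"

lemma t_intersecting_insert:
  "t_intersecting t (insert C F) \<longleftrightarrow>
     t_intersecting t F \<and> t \<le> card C \<and> (\<forall>D\<in>F. t \<le> card (C \<inter> D))"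
  unfolding t_intersecting_def by (auto simp: Int_commute)

lemma shift_family_trivial_kernel:
  assumes nontrivial: "\<not> trivial_family t F" and trivial: "trivial_family t (shift_family i j F)"
    and "t \<noteq> 0"
  obtains T' where "finite T'" "card T' = t - 1" "i \<notin> T'" "j \<notin> T'"
    "\<And>C. C \<in> F \<Longrightarrow> T' \<subseteq> C" "\<And>C. C \<in> F \<Longrightarrow> i \<in> C \<or> j \<in> C"
    "\<And>C. C \<in> F \<Longrightarrow> j \<in> C \<Longrightarrow> i \<notin> C \<Longrightarrow> insert i (C - {j}) \<notin> F"
    "\<exists>A\<in>F. j \<in> A \<and> i \<notin> A" "\<exists>B\<in>F. i \<in> B \<and> j \<notin> B"
proof -
  obtain T where T: "card T = t" "\<And>C. C \<in> F \<Longrightarrow> T \<subseteq> shift_set i j F C"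
    using trivial unfolding trivial_family_def shift_family_def by blast
  have "finite T" using T(1) \<open>t \<noteq> 0\<close> card.infinite by force
  obtain A where A: "A \<in> F" "\<not> T \<subseteq> A" using nontrivial T(1) unfolding trivial_family_def by blast
  then have "shift_set i j F A \<noteq> A" using T(2) by auto
  note moved = shift_set_neqD[OF this]
  have "i \<in> T" "j \<notin> T" using T(2)[OF A(1)] A(2) moved(1,2,4) by auto
  define T' where "T' = T - {i}"
  have T': "finite T'" "card T' = t - 1" "i \<notin> T'" "j \<notin> T'"
    using \<open>finite T\<close> T(1) \<open>i \<in> T\<close> \<open>j \<notin> T\<close> unfolding T'_def by auto
  have member: "T' \<subseteq> C \<and> (i \<in> C \<or> (j \<in> C \<and> i \<notin> C \<and> insert i (C - {j}) \<notin> F))"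
    if C: "C \<in> F" for C
  proof (cases "shift_set i j F C = C")
    case True
    then show ?thesis using T(2)[OF C] \<open>i \<in> T\<close> unfolding T'_def by auto
  next
    case False
    note movedC = shift_set_neqD[OF False]
    then show ?thesis using T(2)[OF C] unfolding T'_def by auto
  qed
  have exB: "\<exists>B\<in>F. i \<in> B \<and> j \<notin> B"
  proof (rule ccontr)
    assume "\<not> ?thesis"
    then have "\<forall>C\<in>F. insert j T' \<subseteq> C" using member by blast
    moreover have "card (insert j T') = t" using T' \<open>t \<noteq> 0\<close> by simp
    ultimately show False using nontrivial unfolding trivial_family_def by auto
  qed
  have exA: "\<exists>A\<in>F. j \<in> A \<and> i \<notin> A" using A(1) moved(1,2) by blast
  show ?thesis
  proof (rule that[OF T' _ _ _ exA exB])
    show "T' \<subseteq> C" "i \<in> C \<or> j \<in> C" if "C \<in> F" for C using member[OF that] by auto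
    show "insert i (C - {j}) \<notin> F" if "C \<in> F" "j \<in> C" "i \<notin> C" for C
      using member[OF that(1)] that(3) by blast
  qed
qed

locale split_kernel =
  fixes n k t :: nat and F :: "nat set set" and i j :: nat and T' :: "nat set"
  assumes maximal: "maximal_t_intersecting n k t F"
    and t_pos: "1 \<le> t"
    and ij: "i \<in> {1..n}" "j \<in> {1..n}" "i \<noteq> j"
    and kernel: "finite T'" "card T' = t - 1" "i \<notin> T'" "j \<notin> T'"
    and kernel_subset: "\<And>C. C \<in> F \<Longrightarrow> T' \<subseteq> C"
    and meets_pair: "\<And>C. C \<in> F \<Longrightarrow> i \<in> C \<or> j \<in> C"
    and both_sides: "\<exists>A\<in>F. j \<in> A \<and> i \<notin> A" "\<exists>B\<in>F. i \<in> B \<and> j \<notin> B"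
begin

definition core :: "nat set" where
  "core = insert i (insert j T')"

definition outside :: "nat set" where
  "outside = {1..n} - core"

lemma family: "F \<subseteq> ksubsets n k"
  and intersecting: "t_intersecting t F"
  and saturated: "\<And>C. C \<in> ksubsets n k \<Longrightarrow> t_intersecting t (insert C F) \<Longrightarrow> C \<in> F"
  using maximal unfolding maximal_t_intersecting_def by auto

lemma card_insert_kernel: "x \<notin> T' \<Longrightarrow> card (insert x T') = t"
  using kernel t_pos by simp

lemma t_less_k: "t < k"
proof -
  obtain A B where AB: "A \<in> F" "B \<in> F" "j \<in> A" "i \<notin> A" "j \<notin> B"
    using both_sides by blast
  note A = ksubsetsD[OF subsetD[OF family AB(1)]]
  have "t \<le> card (A \<inter> B)" using intersecting AB(1,2) unfolding t_intersecting_def by blast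
  also have "\<dots> \<le> card (A - {j})" using A(2) AB(5) by (intro card_mono) auto
  also have "\<dots> < k" using A(2,3) AB(3) card_gt_0_iff[of A] by auto
  finally show ?thesis .
qed

lemma k_less_n: "k < n"
proof -
  obtain A where A: "A \<in> F" "i \<notin> A" using both_sides by blast
  note A' = ksubsetsD[OF subsetD[OF family A(1)]]
  have "card (insert i A) \<le> card {1..n}" using A' ij by (intro card_mono) auto
  then show ?thesis using A' A(2) by simp
qed

lemma card_core: "card core = t + 1"
  using kernel ij t_pos unfolding core_def by simp

lemma core_subset: "core \<subseteq> {1..n}"
proof -
  obtain A where "A \<in> F" using both_sides by blast
  then show ?thesis
    using kernel_subset ksubsetsD(1) family ij unfolding core_def by blast
qed

lemma member_decomp:
  assumes "C \<in> F" "x \<in> C" "y \<notin> C" "{x, y} = {i, j}"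
  shows "C = insert x (T' \<union> (C \<inter> outside))"
proof -
  have "C \<inter> core = insert x T'"
    using assms kernel_subset[OF assms(1)] unfolding core_def by auto
  moreover have "C = (C \<inter> core) \<union> (C \<inter> outside)"
    using ksubsetsD(1)[OF subsetD[OF family assms(1)]] unfolding outside_def by auto
  ultimately show ?thesis by auto
qed

lemma card_Int_outside:
  assumes "C \<in> F" "x \<in> C" "y \<notin> C" "{x, y} = {i, j}"
  shows "card (C \<inter> outside) = k - t"
proof -
  have "x \<notin> T' \<union> (C \<inter> outside)" "T' \<inter> (C \<inter> outside) = {}"
    using assms(4) kernel unfolding outside_def core_def by auto
  moreover have "finite C" using ksubsetsD family assms(1) by blast
  ultimately have "card (insert x (T' \<union> (C \<inter> outside))) = Suc (card T' + card (C \<inter> outside))"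
    using kernel(1) by (simp add: card_Un_disjoint)
  then have "card C = t + card (C \<inter> outside)"
    using member_decomp[OF assms] kernel(2) t_pos by simp
  then show ?thesis using ksubsetsD(3) family assms(1) by fastforce
qed

lemma superset_core_in:
  assumes "C \<in> ksubsets n k" "core \<subseteq> C"
  shows "C \<in> F"
proof (rule saturated[OF assms(1)])
  have "t \<le> card (C \<inter> D)" if D: "D \<in> F" for D
  proof -
    obtain x where "x \<in> {i, j}" "x \<in> D" using meets_pair[OF D] by blast
    then have "insert x T' \<subseteq> C \<inter> D" "card (insert x T') = t"
      using assms(2) kernel_subset[OF D] kernel card_insert_kernel unfolding core_def by auto
    moreover have "finite (C \<inter> D)" using ksubsetsD(2)[OF assms(1)] by simp
    ultimately show ?thesis using card_mono by metis
  qed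
  then show "t_intersecting t (insert C F)"
    using intersecting t_less_k ksubsetsD(3)[OF assms(1)] by (simp add: t_intersecting_insert)
qed

lemma ex_superset_core_avoiding:
  assumes "u \<in> outside"
  obtains C where "C \<in> ksubsets n k" "core \<subseteq> C" "u \<notin> C"
proof -
  have "card outside = n - (t + 1)"
    using core_subset card_core unfolding outside_def by (simp add: card_Diff_subset finite_subset)
  then have "k - t - 1 \<le> card (outside - {u})" using assms k_less_n t_less_k by simp
  then obtain R where R: "R \<subseteq> outside - {u}" "card R = k - t - 1"
    using obtain_subset_with_card_n by metis
  have "finite R" "finite core"
    using R(1) core_subset finite_subset[of _ "{1..n}"] unfolding outside_def by auto
  moreover have "core \<inter> R = {}" using R(1) unfolding outside_def by auto
  ultimately have "card (core \<union> R) = k"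
    using card_core R(2) t_less_k by (simp add: card_Un_disjoint)
  moreover have "core \<union> R \<subseteq> {1..n}" "u \<notin> core \<union> R"
    using core_subset R(1) assms unfolding outside_def by auto
  ultimately show ?thesis using that[of "core \<union> R"] unfolding ksubsets_def by blast
qed

lemma shift_family_outside_nontrivial:
  assumes xy: "x \<in> outside" "y \<in> outside"
  shows "\<not> trivial_family t (shift_family x y F)"
proof
  assume "trivial_family t (shift_family x y F)"
  then obtain T where T: "card T = t" "\<And>C. C \<in> F \<Longrightarrow> T \<subseteq> shift_set x y F C"
    unfolding trivial_family_def shift_family_def by blast
  have x: "x \<notin> core" "x \<in> {1..n}" using xy(1) unfolding outside_def by auto
  obtain A B where AB: "A \<in> F" "B \<in> F" "i \<notin> A" "j \<notin> B" using both_sides by blast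
  have "i \<notin> shift_set x y F A" "j \<notin> shift_set x y F B"
    using AB x unfolding shift_set_eq core_def by auto
  then have "i \<notin> T" "j \<notin> T" using T(2) AB(1,2) by blast+
  moreover have "T \<subseteq> {1..n}"
    using T(2)[OF AB(1)] ksubsetsD(1) shift_set_in_ksubsets[OF subsetD[OF family AB(1)] x(2)]
    by blast
  \<comment> \<open>k-supersets of the core lie in F and are fixed by the shift, so T avoids the outside\<close>
  moreover have "v \<notin> T" if v: "v \<in> outside" for v
  proof -
    obtain C where C: "C \<in> ksubsets n k" "core \<subseteq> C" "v \<notin> C"
      using ex_superset_core_avoiding[OF v] .
    have "insert x (C - {y}) \<in> F" if "y \<in> C" "x \<notin> C"
    proof (rule superset_core_in)
      show "insert x (C - {y}) \<in> ksubsets n k"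
        using insert_Diff_swap_in_ksubsets[OF C(1) that x(2)] .
      show "core \<subseteq> insert x (C - {y})" using C(2) xy(2) unfolding outside_def by auto
    qed
    then have "shift_set x y F C = C" unfolding shift_set_eq by auto
    then show ?thesis using T(2)[OF superset_core_in[OF C(1,2)]] C(3) by auto
  qed
  ultimately have "T \<subseteq> T'" unfolding outside_def core_def by blast
  then have "card T \<le> card T'" by (rule card_mono[OF kernel(1)])
  then show False using kernel(2) T(1) t_pos by simp
qed

end

definition down_closed_in :: "'a::linorder set \<Rightarrow> 'a set \<Rightarrow> bool" where
  "down_closed_in U X \<longleftrightarrow> (\<forall>y\<in>X. \<forall>z\<in>U. z < y \<longrightarrow> z \<in> X)"

lemma down_closed_in_subset:
  assumes "down_closed_in U X" "down_closed_in U Y" "X \<subseteq> U" "Y \<subseteq> U" "\<not> X \<subseteq> Y"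
  shows "Y \<subset> X"
proof -
  obtain a where a: "a \<in> X" "a \<notin> Y" using assms(5) by blast
  have "b \<in> X" if "b \<in> Y" for b
  proof -
    have "\<not> a < b" using assms(2,3) a that unfolding down_closed_in_def by blast
    then have "b < a" using a that by (metis linorder_neqE)
    then show ?thesis using assms(1,4) a that unfolding down_closed_in_def by blast
  qed
  then show ?thesis using a by blast
qed

lemma down_closed_in_eq_if_card_eq:
  assumes "down_closed_in U X" "down_closed_in U Y" "X \<subseteq> U" "Y \<subseteq> U"
    and "finite X" "finite Y" "card X = card Y"
  shows "X = Y"
proof (rule ccontr)
  assume "X \<noteq> Y"
  then consider "\<not> X \<subseteq> Y" | "\<not> Y \<subseteq> X" by blast
  then show False
  proof cases
    case 1
    then have "card Y < card X"
      using down_closed_in_subset[OF assms(1-4)] assms(5) by (simp add: psubset_card_mono)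
    then show False using assms(7) by simp
  next
    case 2
    then have "card X < card Y"
      using down_closed_in_subset[OF assms(2,1,4,3)] assms(6) by (simp add: psubset_card_mono)
    then show False using assms(7) by simp
  qed
qed

lemma down_closed_in_if_shift_stable:
  assumes stable: "\<And>x y. x \<in> U \<Longrightarrow> y \<in> U \<Longrightarrow> x < y \<Longrightarrow> shift_family x y F = F"
    and A: "A \<in> F" "finite A" "a \<in> A" "b \<notin> A" "a \<notin> U" "b \<notin> U"
    and least: "\<And>C. C \<in> F \<Longrightarrow> a \<in> C \<Longrightarrow> b \<notin> C \<Longrightarrow> \<Sum>A \<le> \<Sum>C"
  shows "down_closed_in U (A \<inter> U)"
  unfolding down_closed_in_def
proof (intro ballI impI)
  fix y z assume y: "y \<in> A \<inter> U" and z: "z \<in> U" "z < y"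
  show "z \<in> A \<inter> U"
  proof (rule ccontr)
    assume "z \<notin> A \<inter> U"
    then have "z \<notin> A" using z by blast
    have "shift_set z y F A \<in> F"
      using stable[OF z(1) _ z(2)] y A(1) unfolding shift_family_def by blast
    then have "insert z (A - {y}) \<in> F"
      using shift_set_in_iff[OF A(1)] shift_set_fixedD y \<open>z \<notin> A\<close> by blast
    moreover have "a \<in> insert z (A - {y})" "b \<notin> insert z (A - {y})" using A y z by auto
    ultimately have "\<Sum>A \<le> \<Sum>(insert z (A - {y}))" using least by blast
    then show False using sum_insert_Diff_swap[OF A(2), of y z] y \<open>z \<notin> A\<close> z(2) by simp
  qed
qed

lemma left_compressed_if_shifts_trivial:
  assumes maximal: "maximal_t_intersecting n k t F" and nontrivial: "\<not> trivial_family t F"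
    and "1 \<le> t"
    and shifts: "\<And>x y. 1 \<le> x \<Longrightarrow> x < y \<Longrightarrow> y \<le> n \<Longrightarrow> shift_family x y F \<noteq> F
                   \<Longrightarrow> trivial_family t (shift_family x y F)"
  shows "left_compressed n F"
proof (rule ccontr)
  assume "\<not> left_compressed n F"
  then obtain i j where ij: "1 \<le> i" "i < j" "j \<le> n" and moved: "shift_family i j F \<noteq> F"
    unfolding left_compressed_def by blast
  have "t \<noteq> 0" using \<open>1 \<le> t\<close> by simp
  obtain T' where T': "finite T'" "card T' = t - 1" "i \<notin> T'" "j \<notin> T'"
    and "\<And>C. C \<in> F \<Longrightarrow> T' \<subseteq> C" "\<And>C. C \<in> F \<Longrightarrow> i \<in> C \<or> j \<in> C"
    and not_swapped: "\<And>C. C \<in> F \<Longrightarrow> j \<in> C \<Longrightarrow> i \<notin> C \<Longrightarrow> insert i (C - {j}) \<notin> F"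
    and "\<exists>A\<in>F. j \<in> A \<and> i \<notin> A" "\<exists>B\<in>F. i \<in> B \<and> j \<notin> B"
    by (rule shift_family_trivial_kernel[OF nontrivial shifts[OF ij moved] \<open>t \<noteq> 0\<close>]) (rule that)
  then interpret split_kernel n k t F i j T'
    using maximal \<open>1 \<le> t\<close> ij by unfold_locales auto
  have ij_core: "i \<notin> outside" "j \<notin> outside" unfolding outside_def core_def by auto
  have stable: "shift_family x y F = F" if "x \<in> outside" "y \<in> outside" "x < y" for x y
    using shifts[of x y] shift_family_outside_nontrivial[OF that(1,2)] that
    unfolding outside_def by fastforce
  obtain A where A: "A \<in> F" "j \<in> A" "i \<notin> A"
    and least_A: "\<And>C. C \<in> F \<Longrightarrow> j \<in> C \<Longrightarrow> i \<notin> C \<Longrightarrow> \<Sum>A \<le> \<Sum>C"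
    using ex_has_least_nat[of "\<lambda>C. C \<in> F \<and> j \<in> C \<and> i \<notin> C" _ "\<lambda>C. \<Sum>C"] both_sides(1)
    by blast
  obtain B where B: "B \<in> F" "i \<in> B" "j \<notin> B"
    and least_B: "\<And>C. C \<in> F \<Longrightarrow> i \<in> C \<Longrightarrow> j \<notin> C \<Longrightarrow> \<Sum>B \<le> \<Sum>C"
    using ex_has_least_nat[of "\<lambda>C. C \<in> F \<and> i \<in> C \<and> j \<notin> C" _ "\<lambda>C. \<Sum>C"] both_sides(2)
    by blast
  have fin: "finite A" "finite B" using A(1) B(1) family ksubsetsD(2) by blast+
  \<comment> \<open>minimal members of each side are compressed outside the core, hence agree there\<close>
  have "A \<inter> outside = B \<inter> outside"
  proof (rule down_closed_in_eq_if_card_eq)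
    show "down_closed_in outside (A \<inter> outside)"
      using down_closed_in_if_shift_stable[OF stable A(1) fin(1) A(2,3) ij_core(2,1) least_A] .
    show "down_closed_in outside (B \<inter> outside)"
      using down_closed_in_if_shift_stable[OF stable B(1) fin(2) B(2,3) ij_core least_B] .
    show "card (A \<inter> outside) = card (B \<inter> outside)"
      using card_Int_outside[OF A] card_Int_outside[OF B] by auto
  qed (use fin in auto)
  then have "insert i (A - {j}) = B"
    using member_decomp[OF A] member_decomp[OF B] T'(4) ij_core(2) by auto
  then show False using not_swapped[OF A] B(1) by simp
qed

lemma ex_max_with_least_tiebreak:
  fixes f g :: "'a \<Rightarrow> nat"
  assumes "finite S" "S \<noteq> {}"
  obtains x where "x \<in> S" "\<And>y. y \<in> S \<Longrightarrow> f y \<le> f x"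
    "\<And>y. y \<in> S \<Longrightarrow> f y = f x \<Longrightarrow> g x \<le> g y"
proof -
  have "Max (f ` S) \<in> f ` S" using assms by simp
  then obtain x0 where x0: "x0 \<in> S" "f x0 = Max (f ` S)" by (metis imageE)
  obtain x where "x \<in> S" "f x = f x0" and least: "\<And>y. y \<in> S \<Longrightarrow> f y = f x0 \<Longrightarrow> g x \<le> g y"
    using ex_has_least_nat[of "\<lambda>y. y \<in> S \<and> f y = f x0" x0 g] x0(1) by blast
  moreover have "f y \<le> f x0" if "y \<in> S" for y using x0(2) assms(1) that by simp
  ultimately show ?thesis using that by metis
qed

lemma maximal_t_intersecting_if_co2_maximum:
  assumes F: "F \<subseteq> ksubsets n k" "t_intersecting t F" "\<not> trivial_family t F" and "1 \<le> k"
    and max: "\<And>G. G \<subseteq> ksubsets n k \<Longrightarrow> t_intersecting t G \<Longrightarrow> \<not> trivial_family t G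
               \<Longrightarrow> co2 n k G \<le> co2 n k F"
  shows "maximal_t_intersecting n k t F"
  unfolding maximal_t_intersecting_def
proof (intro conjI F(1,2) ballI impI)
  fix C assume C: "C \<in> ksubsets n k" "t_intersecting t (insert C F)"
  have "\<not> trivial_family t (insert C F)" using F(3) by (auto simp: trivial_family_def)
  then have "co2 n k (insert C F) \<le> co2 n k F" using max C F(1) by simp
  moreover have "finite F" using F(1) finite_ksubsets finite_subset by blast
  ultimately show "C \<in> F" using co2_less_co2_insert C(1) \<open>1 \<le> k\<close> by (meson not_le)
qed

theorem corollary2p5:
  fixes t k n :: nat
  assumes "2 \<le> t" and "t \<le> k" and "k \<le> n"
    and "\<exists>\<G>. \<G> \<subseteq> ksubsets n k \<and> t_intersecting t \<G> \<and> \<not> trivial_family t \<G>"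
  shows "\<exists>\<F>. \<F> \<subseteq> ksubsets n k \<and> left_compressed n \<F> \<and> t_intersecting t \<F>
             \<and> \<not> trivial_family t \<F>
             \<and> (\<forall>\<G>. \<G> \<subseteq> ksubsets n k \<and> t_intersecting t \<G> \<and> \<not> trivial_family t \<G>
                    \<longrightarrow> co2 n k \<G> \<le> co2 n k \<F>)"
proof -
  define S where "S = {G. G \<subseteq> ksubsets n k \<and> t_intersecting t G \<and> \<not> trivial_family t G}"
  have "finite S" unfolding S_def using finite_ksubsets by (simp add: finite_subset[of _ "Pow _"])
  moreover have "S \<noteq> {}" using assms(4) unfolding S_def by auto
  ultimately obtain F where "F \<in> S" and max: "\<And>G. G \<in> S \<Longrightarrow> co2 n k G \<le> co2 n k F"
    and least: "\<And>G. G \<in> S \<Longrightarrow> co2 n k G = co2 n k F \<Longrightarrow> weight F \<le> weight G"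
    using ex_max_with_least_tiebreak by metis
  then have F: "F \<subseteq> ksubsets n k" "t_intersecting t F" "\<not> trivial_family t F"
    unfolding S_def by auto
  have fin: "finite F" "\<forall>A\<in>F. finite A"
    using F(1) finite_ksubsets finite_subset ksubsetsD(2) by blast+
  have "maximal_t_intersecting n k t F"
    using maximal_t_intersecting_if_co2_maximum[OF F] max assms(1,2) unfolding S_def by simp
  moreover have "trivial_family t (shift_family x y F)"
    if xy: "1 \<le> x" "x < y" "y \<le> n" "shift_family x y F \<noteq> F" for x y
  proof (rule ccontr)
    assume "\<not> trivial_family t (shift_family x y F)"
    then have shifted: "shift_family x y F \<in> S"
      using shift_family_subset_ksubsets[OF F(1)] t_intersecting_shift_family[OF F(2) fin(2)] xy
      unfolding S_def by simp
    then have "co2 n k (shift_family x y F) = co2 n k F"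
      using max co2_le_co2_shift_family[OF fin(1), of x n y k] xy by (simp add: le_antisym)
    then have "weight F \<le> weight (shift_family x y F)" using least shifted by blast
    then show False using weight_shift_family_less[OF fin xy(2,4)] by simp
  qed
  ultimately have "left_compressed n F"
    using left_compressed_if_shifts_trivial F(3) assms(1) by simp
  then show ?thesis using \<open>F \<in> S\<close> max unfolding S_def by blast
qed

end
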